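(* Let $I$ be an ideal on $\mathbb{N}$ with $\mathrm{Fin}\subseteq I$ and $I\neq\mathrm{Fin}$. The following are equivalent: (1) there exists a sequence $(x_n)\in\ell_1^{*}$ such that $A_I(x_n)$ is an open subset of $\mathbb{R}$; (2) $I$ is not maximal.
   Context: $\ell_1^{*}=\{(x_n)\in\ell_1 : x_n\neq 0\text{ for every }n\}$. An ideal on $\mathbb{N}$ is a family $I\subseteq P(\mathbb{N})$ closed under finite unions and subsets with $\mathbb{N}\notin I$; $\mathrm{Fin}$ is the ideal of finite sets. An ideal $I$ is maximal if there is no ideal $J$ with $I\subsetneq J$; equivalently, for every $A\subseteq\mathbb{N}$ either $A\in I$ or $\mathbb{N}\setminus A\in I$. $A_I(x_n)=\{\sum_{n\in A}x_n : A\in I\}$. *)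

theory Defs
  imports "HOL-Analysis.Analysis"
begin

definition is_ideal :: "nat set set \<Rightarrow> bool" where
  "is_ideal I \<longleftrightarrow>
     (\<forall>A\<in>I. \<forall>B\<in>I. A \<union> B \<in> I) \<and>
     (\<forall>A\<in>I. \<forall>B. B \<subseteq> A \<longrightarrow> B \<in> I) \<and>
     UNIV \<notin> I"

definition Fin :: "nat set set" where
  "Fin = {A. finite A}"

definition maximal_ideal :: "nat set set \<Rightarrow> bool" where
  "maximal_ideal I \<longleftrightarrow> is_ideal I \<and> \<not> (\<exists>J. is_ideal J \<and> I \<subset> J)"

definition ell1_star :: "(nat \<Rightarrow> real) set" where
  "ell1_star = {x. summable (\<lambda>n. \<bar>x n\<bar>) \<and> (\<forall>n. x n \<noteq> 0)}"

text \<open>Subsum over A (the series is absolutely convergent for x in ell_1).\<close>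
definition subsum :: "(nat \<Rightarrow> real) \<Rightarrow> nat set \<Rightarrow> real" where
  "subsum x A = (\<Sum>n. if n \<in> A then x n else 0)"

definition A_I :: "nat set set \<Rightarrow> (nat \<Rightarrow> real) \<Rightarrow> real set" where
  "A_I I x = {subsum x A | A. A \<in> I}"

end

theory Submission
  imports Defs
begin

text \<open>
  If \<open>I\<close> is maximal, then either \<open>P = {n. x n > 0}\<close> or its complement lies in \<open>I\<close>,
  so \<open>A\<^sub>I(x)\<close> contains its supremum \<open>\<Sum>\<^sub>n\<^sub>\<in>\<^sub>P x n\<close> or its infimum and cannot be open.
  Conversely, pick \<open>A\<close> with \<open>A, -A \<notin> I\<close> and an infinite \<open>C \<in> I\<close>. Put the weights
  \<open>2\<^sup>-\<^sup>k\<^sup>-\<^sup>1\<close> on the enumeration of \<open>C\<close>, so that subsums over \<open>C\<close> realise all of \<open>[0,1]\<close>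
  (binary expansions), and small positive weights on \<open>A - C\<close>, negative ones on \<open>-A - C\<close>.
  For \<open>D \<in> I\<close>, the set \<open>C \<union> D\<close> misses points \<open>a \<in> A\<close> and \<open>b \<notin> A\<close>, and the sums over
  \<open>(D - C) \<union> S \<union> F\<close> with \<open>S \<subseteq> C\<close> and \<open>F \<subseteq> {a, b}\<close> cover a neighbourhood of \<open>\<Sum>\<^sub>n\<^sub>\<in>\<^sub>D x n\<close>.
\<close>

lemma ideal_Un: "is_ideal I \<Longrightarrow> X \<in> I \<Longrightarrow> Y \<in> I \<Longrightarrow> X \<union> Y \<in> I"
  unfolding is_ideal_def by blast

lemma ideal_subset: "is_ideal I \<Longrightarrow> X \<in> I \<Longrightarrow> Y \<subseteq> X \<Longrightarrow> Y \<in> I"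
  unfolding is_ideal_def by blast

lemma maximal_ideal_iff_dichotomy:
  assumes "is_ideal I" "{} \<in> I"
  shows "maximal_ideal I \<longleftrightarrow> (\<forall>A. A \<in> I \<or> - A \<in> I)"
proof
  assume max: "maximal_ideal I"
  show "\<forall>A. A \<in> I \<or> - A \<in> I"
  proof (rule ccontr)
    assume "\<not> (\<forall>A. A \<in> I \<or> - A \<in> I)"
    then obtain A where A: "A \<notin> I" "- A \<notin> I" by blast
    define J where "J = {B. \<exists>C\<in>I. B \<subseteq> C \<union> A}"
    have "is_ideal J"
      unfolding is_ideal_def
    proof (intro conjI ballI allI impI)
      fix B1 B2 assume "B1 \<in> J" "B2 \<in> J"
      then obtain C1 C2 where "C1 \<in> I" "C2 \<in> I" "B1 \<subseteq> C1 \<union> A" "B2 \<subseteq> C2 \<union> A"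
        unfolding J_def by auto
      moreover have "C1 \<union> C2 \<in> I" using ideal_Un[OF assms(1)] calculation by blast
      ultimately show "B1 \<union> B2 \<in> J" unfolding J_def by blast
    next
      fix B1 B assume "B1 \<in> J" "B \<subseteq> B1"
      then show "B \<in> J" unfolding J_def by blast
    next
      show "UNIV \<notin> J"
      proof
        assume "UNIV \<in> J"
        then obtain C where "C \<in> I" "- A \<subseteq> C" unfolding J_def by auto
        with A(2) ideal_subset[OF assms(1)] show False by metis
      qed
    qed
    moreover have "I \<subset> J"
      using A(1) assms(2) unfolding J_def by blast
    ultimately show False using max unfolding maximal_ideal_def by blast
  qed
next
  assume dich: "\<forall>A. A \<in> I \<or> - A \<in> I"
  have "\<not> I \<subset> J" if "is_ideal J" for J
  proof
    assume "I \<subset> J"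
    then obtain B where "B \<in> J" "B \<notin> I" by blast
    with dich \<open>I \<subset> J\<close> have "- B \<in> J" by blast
    with \<open>B \<in> J\<close> have "B \<union> - B \<in> J" using ideal_Un[OF that] by blast
    with that show False unfolding is_ideal_def by simp
  qed
  with assms(1) show "maximal_ideal I" unfolding maximal_ideal_def by blast
qed

lemma open_real_no_greatest:
  fixes S :: "real set"
  assumes "open S" "m \<in> S" "\<forall>y\<in>S. y \<le> m"
  shows False
proof -
  have "Sup S = m" using assms(2,3) by (intro cSup_eq_maximum) auto
  moreover have "Sup S \<notin> S"
    using assms(1,3) by (intro Sup_notin_open[where x="m + 1"]) (auto intro: le_less_trans[OF _ less_add_one])
  ultimately show False using assms(2) by simp
qed

lemma open_real_no_least:
  fixes S :: "real set"
  assumes "open S" "m \<in> S" "\<forall>y\<in>S. m \<le> y"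
  shows False
proof -
  have "Inf S = m" using assms(2,3) by (intro cInf_eq_minimum) auto
  moreover have "Inf S \<notin> S"
    using assms(1,3) by (intro Inf_notin_open[where x="m - 1"]) (auto intro: less_le_trans[OF diff_less[OF zero_less_one]])
  ultimately show False using assms(2) by simp
qed

lemma summable_restrict:
  fixes x :: "nat \<Rightarrow> real"
  assumes "summable (\<lambda>n. \<bar>x n\<bar>)"
  shows "summable (\<lambda>n. if n \<in> X then x n else 0)"
  by (rule summable_comparison_test[OF _ assms]) auto

lemma subsum_Un:
  fixes x :: "nat \<Rightarrow> real"
  assumes "summable (\<lambda>n. \<bar>x n\<bar>)" "X \<inter> Y = {}"
  shows "subsum x (X \<union> Y) = subsum x X + subsum x Y"
proof -
  have "(\<lambda>n. if n \<in> X \<union> Y then x n else 0)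
      = (\<lambda>n. (if n \<in> X then x n else 0) + (if n \<in> Y then x n else 0))"
    using assms(2) by (intro ext) auto
  then show ?thesis
    unfolding subsum_def
    using suminf_add[OF summable_restrict[OF assms(1)] summable_restrict[OF assms(1)]] by simp
qed

lemma subsum_empty [simp]: "subsum x {} = 0"
  unfolding subsum_def by simp

lemma subsum_singleton [simp]: "subsum x {a} = x a"
proof -
  have "(\<lambda>n. if n \<in> {a} then x n else 0) = (\<lambda>n. if n = a then x n else 0)" by auto
  then show ?thesis unfolding subsum_def using sums_single[of a x] sums_unique by metis
qed

lemma subsum_strict_mono_image:
  assumes "strict_mono g"
  shows "subsum x (g ` T) = subsum (x \<circ> g) T"
  unfolding subsum_def
  by (rule suminf_mono_reindex[OF assms, symmetric, THEN trans])
     (auto simp: strict_mono_eq[OF assms] image_iff intro!: arg_cong[where f=suminf])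

lemma subsum_le_subsum_positive:
  fixes x :: "nat \<Rightarrow> real"
  assumes "summable (\<lambda>n. \<bar>x n\<bar>)"
  shows "subsum x B \<le> subsum x {n. 0 < x n}"
  unfolding subsum_def
  using summable_restrict[OF assms, of B] summable_restrict[OF assms, of "{n. 0 < x n}"]
  by (intro suminf_le) auto

lemma subsum_nonpositive_le_subsum:
  fixes x :: "nat \<Rightarrow> real"
  assumes "summable (\<lambda>n. \<bar>x n\<bar>)"
  shows "subsum x (- {n. 0 < x n}) \<le> subsum x B"
  unfolding subsum_def
  using summable_restrict[OF assms, of B] summable_restrict[OF assms, of "- {n. 0 < x n}"]
  by (intro suminf_le) auto

lemma A_I_not_open_if_dichotomy:
  fixes x :: "nat \<Rightarrow> real"
  assumes "summable (\<lambda>n. \<bar>x n\<bar>)" and dich: "\<And>A. A \<in> I \<or> - A \<in> I"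
  shows "\<not> open (A_I I x)"
proof
  assume op: "open (A_I I x)"
  define P where "P = {n. 0 < x n}"
  from dich consider "P \<in> I" | "- P \<in> I" by blast
  then show False
  proof cases
    case 1
    then have "subsum x P \<in> A_I I x" unfolding A_I_def by blast
    moreover have "\<forall>y\<in>A_I I x. y \<le> subsum x P"
      unfolding A_I_def P_def using subsum_le_subsum_positive[OF assms(1)] by blast
    ultimately show False using op open_real_no_greatest by blast
  next
    case 2
    then have "subsum x (- P) \<in> A_I I x" unfolding A_I_def by blast
    moreover have "\<forall>y\<in>A_I I x. subsum x (- P) \<le> y"
      unfolding A_I_def P_def using subsum_nonpositive_le_subsum[OF assms(1)] by blast
    ultimately show False using op open_real_no_least by blast
  qed
qed

lemma floor_mult_2:
  fixes y :: real
  shows "\<lfloor>2 * y\<rfloor> = 2 * \<lfloor>y\<rfloor> + (if odd \<lfloor>2 * y\<rfloor> then 1 else 0)"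
proof -
  have "2 * \<lfloor>y\<rfloor> \<le> \<lfloor>2 * y\<rfloor>" by (subst le_floor_iff) linarith
  moreover have "\<lfloor>2 * y\<rfloor> \<le> 2 * \<lfloor>y\<rfloor> + 1" by linarith
  ultimately have "\<lfloor>2 * y\<rfloor> = 2 * \<lfloor>y\<rfloor> \<or> \<lfloor>2 * y\<rfloor> = 2 * \<lfloor>y\<rfloor> + 1" by linarith
  then show ?thesis by auto
qed

lemma sum_binary_digits:
  fixes t :: real
  shows "(\<Sum>k<n. if odd \<lfloor>t * 2 ^ Suc k\<rfloor> then (1/2::real) ^ Suc k else 0)
          = \<lfloor>t * 2 ^ n\<rfloor> / 2 ^ n - \<lfloor>t\<rfloor>"
proof (induction n)
  case 0
  then show ?case by simp
next
  case (Suc n)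
  have double: "t * 2 ^ Suc n = 2 * (t * 2 ^ n)" by simp
  have "real_of_int \<lfloor>t * 2 ^ Suc n\<rfloor>
      = 2 * \<lfloor>t * 2 ^ n\<rfloor> + (if odd \<lfloor>t * 2 ^ Suc n\<rfloor> then 1 else 0)"
    unfolding double by (subst floor_mult_2) simp
  with Suc show ?case by (auto simp: field_simps power_divide)
qed

lemma subsum_half_powers_surj:
  fixes t :: real
  assumes "0 \<le> t" "t \<le> 1"
  shows "\<exists>T. subsum (\<lambda>k. (1/2) ^ Suc k) T = t"
proof -
  have "\<exists>T. (\<lambda>k. if k \<in> T then (1/2::real) ^ Suc k else 0) sums t"
  proof (cases "t = 1")
    case True
    then show ?thesis using power_half_series by (intro exI[of _ UNIV]) simp
  next
    case False
    with assms have floor_t: "\<lfloor>t\<rfloor> = 0" by (simp add: floor_eq_iff)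
    \<comment> \<open>the binary digits of \<open>t\<close>: digit \<open>k + 1\<close> is the parity of \<open>\<lfloor>t 2\<^sup>k\<^sup>+\<^sup>1\<rfloor>\<close>\<close>
    define T where "T = {k. odd \<lfloor>t * 2 ^ Suc k\<rfloor>}"
    have "(\<lambda>n. \<lfloor>t * 2 ^ n\<rfloor> / 2 ^ n) \<longlonglongrightarrow> t"
    proof (rule real_tendsto_sandwich[where f="\<lambda>n. t - (1/2) ^ n" and h="\<lambda>n. t"])
      show "\<forall>\<^sub>F n in sequentially. t - (1/2) ^ n \<le> \<lfloor>t * 2 ^ n\<rfloor> / 2 ^ n"
      proof (intro always_eventually allI)
        fix n :: nat
        have "t * 2 ^ n - 1 \<le> \<lfloor>t * 2 ^ n\<rfloor>" by linarith
        then have "(t * 2 ^ n - 1) / 2 ^ n \<le> \<lfloor>t * 2 ^ n\<rfloor> / 2 ^ n"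
          by (simp add: divide_right_mono)
        then show "t - (1/2) ^ n \<le> \<lfloor>t * 2 ^ n\<rfloor> / 2 ^ n"
          by (simp add: field_simps power_divide)
      qed
      show "\<forall>\<^sub>F n in sequentially. \<lfloor>t * 2 ^ n\<rfloor> / 2 ^ n \<le> t"
      proof (intro always_eventually allI)
        fix n :: nat
        have "\<lfloor>t * 2 ^ n\<rfloor> \<le> t * 2 ^ n" by linarith
        then show "\<lfloor>t * 2 ^ n\<rfloor> / 2 ^ n \<le> t" by (simp add: field_simps)
      qed
      have "(\<lambda>n. t - (1/2::real) ^ n) \<longlonglongrightarrow> t - 0"
        by (intro tendsto_intros) simp
      then show "(\<lambda>n. t - (1/2::real) ^ n) \<longlonglongrightarrow> t" by simp
    qed simp
    then have "(\<lambda>n. \<Sum>k<n. if k \<in> T then (1/2::real) ^ Suc k else 0) \<longlonglongrightarrow> t"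
      unfolding T_def using sum_binary_digits[of t] floor_t by simp
    then show ?thesis unfolding sums_def by blast
  qed
  then show ?thesis unfolding subsum_def using sums_unique by metis
qed

lemma subsum_half_powers_bounds:
  "0 \<le> subsum (\<lambda>k. (1/2::real) ^ Suc k) T \<and> subsum (\<lambda>k. (1/2::real) ^ Suc k) T \<le> 1"
proof -
  have "summable (\<lambda>k. (1/2::real) ^ Suc k)"
    using power_half_series sums_summable by blast
  then have "summable (\<lambda>k. if k \<in> T then (1/2::real) ^ Suc k else 0)"
    by (rule summable_comparison_test[rotated]) auto
  moreover from this have "suminf (\<lambda>k. if k \<in> T then (1/2::real) ^ Suc k else 0) \<le> 1"
    by (intro sums_le[OF _ summable_sums power_half_series]) auto
  ultimately show ?thesis unfolding subsum_def by (auto intro: suminf_nonneg)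
qed

lemma range_subsum_half_powers: "range (subsum (\<lambda>k. (1/2::real) ^ Suc k)) = {0..1}"
proof
  show "range (subsum (\<lambda>k. (1/2::real) ^ Suc k)) \<subseteq> {0..1}"
    using subsum_half_powers_bounds by auto
  show "{0..1} \<subseteq> range (subsum (\<lambda>k. (1/2::real) ^ Suc k))"
    using subsum_half_powers_surj by (metis atLeastAtMost_iff rangeI subsetI)
qed

lemma subsum_image_Pow_enumerate:
  assumes "infinite C" "\<And>k. x (enumerate C k) = (1/2) ^ Suc k"
  shows "subsum x ` Pow C = {0..1}"
proof -
  have range_C: "range (enumerate C) = C"
    using range_enumerate[OF assms(1)] .
  have "Pow C = (\<lambda>T. enumerate C ` T) ` UNIV"
  proof
    show "Pow C \<subseteq> (\<lambda>T. enumerate C ` T) ` UNIV"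
    proof
      fix S assume "S \<in> Pow C"
      then have "S = enumerate C ` (enumerate C -` S)"
        by (auto simp: image_vimage_eq range_C)
      then show "S \<in> (\<lambda>T. enumerate C ` T) ` UNIV" by (rule image_eqI) simp
    qed
    show "(\<lambda>T. enumerate C ` T) ` UNIV \<subseteq> Pow C"
      using range_C by auto
  qed
  then have "subsum x ` Pow C = (\<lambda>T. subsum x (enumerate C ` T)) ` UNIV"
    by (simp add: image_image)
  also have "\<dots> = range (subsum (x \<circ> enumerate C))"
    by (simp only: subsum_strict_mono_image[OF strict_mono_enumerate[OF assms(1)]])
  also have "x \<circ> enumerate C = (\<lambda>k. (1/2) ^ Suc k)"
    using assms(2) by (simp add: fun_eq_iff)
  finally show ?thesis
    using range_subsum_half_powers by simp
qed

lemma subsum_shift_mem_A_I: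
  fixes x :: "nat \<Rightarrow> real"
  assumes I: "is_ideal I" "Fin \<subseteq> I" and "C \<in> I"
    and sx: "summable (\<lambda>n. \<bar>x n\<bar>)" and fill: "subsum x ` Pow C = {0..1}"
    and D: "D \<in> I" "D \<inter> C = {}" and F: "finite F" "F \<inter> (C \<union> D) = {}"
    and t: "0 \<le> t" "t \<le> 1"
  shows "subsum x D + t + subsum x F \<in> A_I I x"
proof -
  from t fill obtain S where S: "S \<subseteq> C" "subsum x S = t"
    by (metis PowD atLeastAtMost_iff imageE)
  have "F \<in> I" using F(1) I(2) unfolding Fin_def by blast
  moreover have "S \<in> I" using ideal_subset[OF I(1) \<open>C \<in> I\<close> S(1)] .
  ultimately have "D \<union> S \<union> F \<in> I" using D(1) ideal_Un[OF I(1)] by blast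
  moreover have "subsum x (D \<union> S \<union> F) = subsum x D + t + subsum x F"
  proof -
    have "subsum x (D \<union> S \<union> F) = subsum x (D \<union> S) + subsum x F"
      using F(2) S(1) by (intro subsum_Un[OF sx]) auto
    also have "subsum x (D \<union> S) = subsum x D + t"
      using D(2) S by (subst subsum_Un[OF sx]) auto
    finally show ?thesis .
  qed
  ultimately show ?thesis unfolding A_I_def by force
qed

lemma ball_subset_shifted_unit_intervals:
  fixes v u p q :: real
  assumes u: "0 \<le> u" "u \<le> 1" and p: "0 < p" "p \<le> 1" and q: "-1 \<le> q" "q < 0"
    and S: "\<And>t. 0 \<le> t \<Longrightarrow> t \<le> 1 \<Longrightarrow> v + t \<in> S \<and> v + t + p \<in> S \<and> v + t + q \<in> S"
  shows "ball (v + u) (min p (- q)) \<subseteq> S"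
proof
  fix y assume "y \<in> ball (v + u) (min p (- q))"
  then have y: "\<bar>y - (v + u)\<bar> < min p (- q)" by (simp add: dist_real_def abs_minus_commute)
  consider "0 \<le> y - v" "y - v \<le> 1" | "1 < y - v" | "y - v < 0" by linarith
  then show "y \<in> S"
  proof cases
    case 1
    then show ?thesis using S[of "y - v"] by simp
  next
    case 2
    then show ?thesis using S[of "y - v - p"] y u p by auto
  next
    case 3
    then show ?thesis using S[of "y - v - q"] y u q by auto
  qed
qed

lemma open_A_I:
  fixes x :: "nat \<Rightarrow> real"
  assumes I: "is_ideal I" "Fin \<subseteq> I" and "C \<in> I"
    and sx: "summable (\<lambda>n. \<bar>x n\<bar>)" and fill: "subsum x ` Pow C = {0..1}"
    and A: "A \<notin> I" "- A \<notin> I"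
    and pos: "\<And>n. n \<in> A \<Longrightarrow> n \<notin> C \<Longrightarrow> 0 < x n \<and> x n \<le> 1"
    and neg: "\<And>n. n \<notin> A \<Longrightarrow> n \<notin> C \<Longrightarrow> -1 \<le> x n \<and> x n < 0"
  shows "open (A_I I x)"
  unfolding open_contains_ball
proof
  fix m assume "m \<in> A_I I x"
  then obtain D where D: "D \<in> I" "m = subsum x D" unfolding A_I_def by auto
  have CD: "C \<union> D \<in> I" using ideal_Un[OF I(1) \<open>C \<in> I\<close> D(1)] .
  obtain a where a: "a \<in> A" "a \<notin> C \<union> D"
    using A(1) ideal_subset[OF I(1) CD, of A] by blast
  obtain b where b: "b \<notin> A" "b \<notin> C \<union> D"
    using A(2) ideal_subset[OF I(1) CD, of "- A"] by blast
  have xa: "0 < x a" "x a \<le> 1" and xb: "-1 \<le> x b" "x b < 0"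
    using pos[OF a(1)] neg[OF b(1)] a(2) b(2) by auto
  have shift: "subsum x (D - C) + t + subsum x F \<in> A_I I x"
    if "0 \<le> t" "t \<le> 1" "F \<subseteq> {a, b}" for t F
    using that a b finite_subset[OF that(3)]
    by (intro subsum_shift_mem_A_I[OF I \<open>C \<in> I\<close> sx fill ideal_subset[OF I(1) D(1)]]) auto
  have "m = subsum x (D - C) + subsum x (D \<inter> C)"
    unfolding D(2) using subsum_Un[OF sx, of "D - C" "D \<inter> C"]
    by (simp add: Un_Diff_Int Diff_Int_distrib2 Int_assoc)
  also have "ball \<dots> (min (x a) (- x b)) \<subseteq> A_I I x"
  proof (rule ball_subset_shifted_unit_intervals[OF _ _ xa xb])
    show "0 \<le> subsum x (D \<inter> C)" "subsum x (D \<inter> C) \<le> 1"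
      using fill by auto
    show "subsum x (D - C) + t \<in> A_I I x \<and> subsum x (D - C) + t + x a \<in> A_I I x
        \<and> subsum x (D - C) + t + x b \<in> A_I I x" if "0 \<le> t" "t \<le> 1" for t
      using shift[OF that, of "{}"] shift[OF that, of "{a}"] shift[OF that, of "{b}"] by simp
  qed
  finally have "ball m (min (x a) (- x b)) \<subseteq> A_I I x" .
  moreover have "0 < min (x a) (- x b)" using xa xb by simp
  ultimately show "\<exists>e>0. ball m e \<subseteq> A_I I x" by blast
qed

lemma ex_ell1_star_open_A_I:
  assumes I: "is_ideal I" "Fin \<subseteq> I" and C: "C \<in> I" "infinite C"
    and A: "A \<notin> I" "- A \<notin> I"
  shows "\<exists>x\<in>ell1_star. open (A_I I x)"
proof -
  define g where "g = enumerate C"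
  have g: "strict_mono g" "inj g" "range g = C"
    unfolding g_def using strict_mono_enumerate inj_enumerate range_enumerate C(2) by blast+
  define x where "x n = (if n \<in> C then (1/2) ^ Suc (inv g n)
      else if n \<in> A then (1/2) ^ (n + 2) else - ((1/2::real) ^ (n + 2)))" for n
  have x_g: "x (g k) = (1/2) ^ Suc k" for k
  proof -
    have "g k \<in> C" using g(3) by blast
    then show ?thesis unfolding x_def using inv_f_f[OF g(2)] by simp
  qed
  have restrict_g: "(\<lambda>k. if g k \<in> C then x (g k) else 0) = (\<lambda>k. (1/2) ^ Suc k)"
    using g(3) x_g by auto
  have "(\<lambda>k. if g k \<in> C then x (g k) else 0) sums 1"
    unfolding restrict_g by (rule power_half_series)
  then have "(\<lambda>n. if n \<in> C then x n else 0) sums 1"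
    using sums_mono_reindex[OF g(1), of "\<lambda>n. if n \<in> C then x n else 0"] g(3) by auto
  then have "summable (\<lambda>n. (if n \<in> C then x n else 0) + (1/2::real) ^ (n + 2))"
    by (intro summable_add) (auto simp: sums_summable summable_geometric)
  then have sx: "summable (\<lambda>n. \<bar>x n\<bar>)"
    by (rule summable_comparison_test') (auto simp: x_def)
  have "open (A_I I x)"
  proof (rule open_A_I[OF I C(1) sx _ A])
    show "subsum x ` Pow C = {0..1}"
      using subsum_image_Pow_enumerate[OF C(2)] x_g unfolding g_def by blast
    show "0 < x n \<and> x n \<le> 1" if "n \<in> A" "n \<notin> C" for n
      using that power_le_one[of "1/2::real" "n + 2"] by (simp add: x_def)
    show "-1 \<le> x n \<and> x n < 0" if "n \<notin> A" "n \<notin> C" for n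
      using that power_le_one[of "1/2::real" "n + 2"] by (simp add: x_def)
  qed
  moreover have "x \<in> ell1_star" unfolding ell1_star_def using sx by (simp add: x_def)
  ultimately show ?thesis by blast
qed

theorem mainTheorem14:
  fixes I :: "nat set set"
  assumes "is_ideal I" and "Fin \<subseteq> I" and "I \<noteq> Fin"
  shows "(\<exists>x\<in>ell1_star. open (A_I I x)) \<longleftrightarrow> \<not> maximal_ideal I"
proof -
  have "{} \<in> I" using assms(2) unfolding Fin_def by auto
  then have max_iff: "maximal_ideal I \<longleftrightarrow> (\<forall>A. A \<in> I \<or> - A \<in> I)"
    by (rule maximal_ideal_iff_dichotomy[OF assms(1)])
  show ?thesis
  proof
    assume "\<exists>x\<in>ell1_star. open (A_I I x)"
    then obtain x where "summable (\<lambda>n. \<bar>x n\<bar>)" "open (A_I I x)"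
      unfolding ell1_star_def by blast
    then show "\<not> maximal_ideal I"
      using A_I_not_open_if_dichotomy max_iff by blast
  next
    assume "\<not> maximal_ideal I"
    then obtain A where "A \<notin> I" "- A \<notin> I" using max_iff by blast
    moreover obtain C where "C \<in> I" "infinite C"
      using assms(2,3) unfolding Fin_def by blast
    ultimately show "\<exists>x\<in>ell1_star. open (A_I I x)"
      using ex_ell1_star_open_A_I[OF assms(1,2)] by blast
  qed
qed

end
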